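(* Let $T$ be either the Giry monad $P$ or the subprobability monad $M$ on $\mathbf{Meas}$, and let $\theta_Y:DY\to TY$ be the equalizer of $\eta_{TY},T\eta_Y:TY\to TTY$. Then $D$ is an idempotent submonad of $T$, and for all measurable spaces $X,Y$ a Kleisli morphism (Markov kernel) $f:X\rightsquigarrow Y$ is deterministic if and only if $f^\sharp:X\to TY$ factors through $\theta_Y$; i.e. the Kleisli morphisms of $D$ are exactly the deterministic morphisms of $\mathsf{Kl}(T)$.
   Context: $PX$: probability measures on $X$ with the coarsest $\sigma$-algebra making $p\mapsto p(A)$ measurable; $\eta_X(x)=\delta_x$; $\mu_X(\rho)(A)=\int_{PX}p(A)\,\rho(dp)$; monoidal structure given by product measures. $M$ is analogous for subprobability measures. $\mathsf{Kl}(T)$: morphisms $f:X\rightsquigarrow Y$ correspond to measurable $f^\sharp:X\to TY$, composition $(g\circledcirc f)^\sharp=\mu\circ T(g^\sharp)\circ f^\sharp$, tensor $\otimes$ equal to $\times$ on objects with $(f\otimes g)^\sharp$ the product kernel. $\mathsf{copy}_X^\sharp(x)=\delta_{(x,x)}$, $\mathsf{del}_X^\sharp=\eta\circ!_X$. $f$ is deterministic if $\mathsf{copy}_Y\circledcirc f=(f\otimes f)\circledcirc\mathsf{copy}_X$ and $\mathsf{del}_Y\circledcirc f=\mathsf{del}_X$. The monad $D$: $Dg$ is the unique map with $\theta_Z\circ Dg=Tg\circ\theta_Y$, unit $e_X$ the unique map with $\theta_X\circ e_X=\eta_X$, multiplication $m_X$ the unique map with $\theta_X\circ m_X=\mu_X\circ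 T\theta_X\circ\theta_{DX}$; idempotent means its multiplication is an isomorphism. *)

theory Defs
  imports "HOL-Probability.Probability"
begin

datatype giry_kind = Giry | Subprob

definition Tm :: "giry_kind \<Rightarrow> 'a measure \<Rightarrow> 'a measure measure" where
  "Tm k X = (case k of Giry \<Rightarrow> prob_algebra X | Subprob \<Rightarrow> subprob_algebra X)"

text \<open>T on morphisms is pushforward: T g p = distr p Y g.  The unit is return.
  The multiplication, as in the paper: mu_X(rho)(A) = integral of p(A) d rho(p).\<close>
definition mu :: "'a measure \<Rightarrow> 'a measure measure \<Rightarrow> 'a measure" where
  "mu X \<rho> = measure_of (space X) (sets X) (\<lambda>A. \<integral>\<^sup>+ p. emeasure p A \<partial>\<rho>)"

text \<open>The equalizer theta_Y : DY \<rightarrow> TY of eta_{TY} and T eta_Y in Meas: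
  the subset of TY on which the two maps agree, with the subspace sigma-algebra;
  theta_Y is the inclusion.\<close>
definition Dsp :: "giry_kind \<Rightarrow> 'a measure \<Rightarrow> 'a measure measure" where
  "Dsp k Y = restrict_space (Tm k Y)
     {p \<in> space (Tm k Y). return (Tm k Y) p = distr p (Tm k Y) (return Y)}"

definition theta :: "'a measure \<Rightarrow> 'a measure" where
  "theta p = p"

text \<open>The multiplication m_X of D (determined by theta_X o m_X = mu_X o T theta_X o theta_{DX}).\<close>
definition Dmult :: "giry_kind \<Rightarrow> 'a measure \<Rightarrow> 'a measure measure \<Rightarrow> 'a measure" where
  "Dmult k X \<rho> = mu X (distr (theta \<rho>) (Tm k X) theta)"

text \<open>Kleisli category Kl(T): a morphism X \<leadsto> Y is a measurable f : X \<rightarrow> TY.\<close>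
definition kcomp :: "giry_kind \<Rightarrow> 'c measure \<Rightarrow> ('b \<Rightarrow> 'c measure) \<Rightarrow> ('a \<Rightarrow> 'b measure) \<Rightarrow> 'a \<Rightarrow> 'c measure" where
  "kcomp k Z g f = (\<lambda>x. mu Z (distr (f x) (Tm k Z) g))"

definition ktensor :: "('a \<Rightarrow> 'b measure) \<Rightarrow> ('c \<Rightarrow> 'd measure) \<Rightarrow> 'a \<times> 'c \<Rightarrow> ('b \<times> 'd) measure" where
  "ktensor f g = (\<lambda>(x1, x2). f x1 \<Otimes>\<^sub>M g x2)"

definition kcopy :: "'a measure \<Rightarrow> 'a \<Rightarrow> ('a \<times> 'a) measure" where
  "kcopy X = (\<lambda>x. return (X \<Otimes>\<^sub>M X) (x, x))"

definition one_space :: "unit measure" where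
  "one_space = count_space UNIV"

definition kdel :: "'a measure \<Rightarrow> 'a \<Rightarrow> unit measure" where
  "kdel X = (\<lambda>x. return one_space ())"

text \<open>Deterministic Kleisli morphisms (equality of morphisms X \<leadsto> Z means equality on space X).\<close>
definition deterministic :: "giry_kind \<Rightarrow> 'a measure \<Rightarrow> 'b measure \<Rightarrow> ('a \<Rightarrow> 'b measure) \<Rightarrow> bool" where
  "deterministic k X Y f \<longleftrightarrow>
     (\<forall>x\<in>space X. kcomp k (Y \<Otimes>\<^sub>M Y) (kcopy Y) f x
                   = kcomp k (Y \<Otimes>\<^sub>M Y) (ktensor f f) (kcopy X) x) \<and>
     (\<forall>x\<in>space X. kcomp k one_space (kdel Y) f x = kdel X x)"

end

theory Submission
  imports Defs
begin

text \<open>A measure \<open>p \<in> TY\<close> lies in the equalizer \<open>DY\<close> iff \<open>\<delta>\<^sub>p = T\<eta>(p)\<close>. Evaluating this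
  equation at the measurable sets \<open>{q. q(A) = 1}\<close> shows that \<open>p\<close> is a probability measure
  taking only the values 0 and 1. Conversely, if \<open>p\<close> is such a zero-one measure then
  \<open>\<delta>\<^sub>y(A) = p(A)\<close> for \<open>p\<close>-almost every \<open>y\<close>, and the sets \<open>B\<close> with \<open>\<delta>\<^sub>y \<in> B \<longleftrightarrow> p \<in> B\<close>
  almost everywhere form a \<open>\<sigma>\<close>-algebra containing the generators of the \<open>\<sigma>\<close>-algebra of \<open>TY\<close>,
  so \<open>T\<eta>(p) = \<delta>\<^sub>p\<close>. Hence \<open>DY\<close> is the space of zero-one measures on \<open>Y\<close>. These are closed
  under pushforward and under \<open>\<mu>\<close>, so \<open>D\<close> is a submonad, and the same argument shows that a
  zero-one measure \<open>\<rho>\<close> on \<open>DX\<close> is the Dirac measure at its multiplication, so that \<open>m\<^sub>X\<close> is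
  inverse to the unit at \<open>DX\<close>. Finally, \<open>copy \<circ> f = (f \<otimes> f) \<circ> copy\<close> at \<open>x\<close> says
  \<open>f(x)(A \<inter> B) = f(x)(A) f(x)(B)\<close>, which forces \<open>f(x)(A) \<in> {0, 1}\<close>, and \<open>del \<circ> f = del\<close> says
  that \<open>f(x)\<close> is a probability measure.\<close>

section \<open>The monad \<open>T\<close>\<close>

lemma space_Tm:
  "p \<in> space (Tm k X) \<longleftrightarrow>
     sets p = sets X \<and> (case k of Giry \<Rightarrow> prob_space p | Subprob \<Rightarrow> subprob_space p)"
  by (cases k) (auto simp: Tm_def space_prob_algebra space_subprob_algebra)

lemma space_TmD: "p \<in> space (Tm k X) \<Longrightarrow> sets p = sets X \<and> subprob_space p"
  by (cases k) (auto simp: space_Tm prob_space_imp_subprob_space)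

lemma prob_space_in_space_Tm: "sets p = sets X \<Longrightarrow> prob_space p \<Longrightarrow> p \<in> space (Tm k X)"
  by (cases k) (auto simp: space_Tm prob_space_imp_subprob_space)

lemma measurable_emeasure_Tm: "A \<in> sets X \<Longrightarrow> (\<lambda>p. emeasure p A) \<in> borel_measurable (Tm k X)"
  by (cases k) (auto simp: Tm_def prob_algebra_def intro!: measurable_restrict_space1)

lemma measurable_TmI:
  assumes "\<And>a. a \<in> space M \<Longrightarrow> K a \<in> space (Tm k N)"
    and "\<And>A. A \<in> sets N \<Longrightarrow> (\<lambda>a. emeasure (K a) A) \<in> borel_measurable M"
  shows "K \<in> measurable M (Tm k N)"
proof (cases k)
  case Giry
  then show ?thesis
    using assms by (auto simp: Tm_def space_prob_algebra intro!: measurable_prob_algebraI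
        measurable_subprob_algebra prob_space_imp_subprob_space)
qed (use assms in \<open>auto simp: Tm_def space_subprob_algebra intro!: measurable_subprob_algebra\<close>)

lemma measurable_return_Tm: "return X \<in> measurable X (Tm k X)"
  by (cases k) (auto simp: Tm_def)

lemma measurable_distr_Tm: "g \<in> measurable X Y \<Longrightarrow> (\<lambda>p. distr p Y g) \<in> measurable (Tm k X) (Tm k Y)"
  by (cases k) (auto simp: Tm_def intro: measurable_distr measurable_distr_prob_space)

lemma sets_mu [simp]: "sets (mu X \<rho>) = sets X"
  and space_mu [simp]: "space (mu X \<rho>) = space X"
  by (simp_all add: mu_def)

lemma emeasure_mu:
  assumes \<rho>: "sets \<rho> = sets (Tm k X)" and A: "A \<in> sets X"
  shows "emeasure (mu X \<rho>) A = (\<integral>\<^sup>+ p. emeasure p A \<partial>\<rho>)"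
proof (rule emeasure_measure_of[OF mu_def])
  show "countably_additive (sets (mu X \<rho>)) (\<lambda>B. \<integral>\<^sup>+ p. emeasure p B \<partial>\<rho>)"
  proof (rule countably_additiveI)
    fix A :: "nat \<Rightarrow> 'a set" assume A: "range A \<subseteq> sets (mu X \<rho>)" "disjoint_family A"
    have "(\<Sum>i. \<integral>\<^sup>+ p. emeasure p (A i) \<partial>\<rho>) = (\<integral>\<^sup>+ p. (\<Sum>i. emeasure p (A i)) \<partial>\<rho>)"
      using A \<rho> by (subst nn_integral_suminf) (auto simp: measurable_emeasure_Tm cong: measurable_cong_sets)
    also have "\<dots> = (\<integral>\<^sup>+ p. emeasure p (\<Union>i. A i) \<partial>\<rho>)"
      using A sets_eq_imp_space_eq[OF \<rho>]
      by (intro nn_integral_cong suminf_emeasure) (auto dest!: space_TmD)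
    finally show "(\<Sum>i. \<integral>\<^sup>+ p. emeasure p (A i) \<partial>\<rho>) = (\<integral>\<^sup>+ p. emeasure p (\<Union>i. A i) \<partial>\<rho>)" .
  qed
qed (auto simp: A sets.space_closed positive_def)

lemma mu_return:
  assumes q: "q \<in> space (Tm k X)"
  shows "mu X (return (Tm k X) q) = q"
proof (rule measure_eqI)
  show "sets (mu X (return (Tm k X) q)) = sets q"
    using space_TmD[OF q] by simp
  show "emeasure (mu X (return (Tm k X) q)) A = emeasure q A"
    if "A \<in> sets (mu X (return (Tm k X) q))" for A
    using that q by (simp add: emeasure_mu[where k=k] nn_integral_return measurable_emeasure_Tm)
qed

lemma mu_distr_return:
  assumes p: "p \<in> space (Tm k Y)" and g: "g \<in> measurable Y Z"
  shows "mu Z (distr p (Tm k Z) (\<lambda>y. return Z (g y))) = distr p Z g"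
proof (rule measure_eqI)
  have sets_p: "sets p = sets Y"
    using space_TmD[OF p] by simp
  have g': "g \<in> measurable p Z"
    using g sets_p by (simp cong: measurable_cong_sets)
  have ret: "(\<lambda>y. return Z (g y)) \<in> measurable p (Tm k Z)"
    using measurable_compose[OF g' measurable_return_Tm] .
  show "sets (mu Z (distr p (Tm k Z) (\<lambda>y. return Z (g y)))) = sets (distr p Z g)"
    by simp
  fix C assume "C \<in> sets (mu Z (distr p (Tm k Z) (\<lambda>y. return Z (g y))))"
  then have C: "C \<in> sets Z" by simp
  have "emeasure (mu Z (distr p (Tm k Z) (\<lambda>y. return Z (g y)))) C
      = (\<integral>\<^sup>+ y. emeasure (return Z (g y)) C \<partial>p)"
    using ret C by (simp add: emeasure_mu[where k=k] nn_integral_distr measurable_emeasure_Tm)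
  also have "\<dots> = (\<integral>\<^sup>+ y. indicator C (g y) \<partial>p)"
    using C by simp
  also have "\<dots> = emeasure (distr p Z g) C"
    using g' C by (simp add: nn_integral_distr[symmetric])
  finally show "emeasure (mu Z (distr p (Tm k Z) (\<lambda>y. return Z (g y)))) C = emeasure (distr p Z g) C" .
qed

lemma measurable_mu: "mu X \<in> measurable (Tm k (Tm k X)) (Tm k X)"
proof (rule measurable_TmI)
  fix \<rho> assume \<rho>: "\<rho> \<in> space (Tm k (Tm k X))"
  then have sets_\<rho>: "sets \<rho> = sets (Tm k X)" and "subprob_space \<rho>"
    using space_TmD by blast+
  have space_\<rho>: "space \<rho> = space (Tm k X)"
    using sets_eq_imp_space_eq[OF sets_\<rho>] .
  have emeasure_space: "emeasure (mu X \<rho>) (space X) = (\<integral>\<^sup>+ p. emeasure p (space X) \<partial>\<rho>)"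
    using emeasure_mu[OF sets_\<rho>] by simp
  show "mu X \<rho> \<in> space (Tm k X)"
  proof (cases k)
    case Giry
    then have "prob_space \<rho>" "\<And>p. p \<in> space \<rho> \<Longrightarrow> emeasure p (space X) = 1"
      using \<rho> space_\<rho> by (auto simp: Tm_def space_prob_algebra in_space_prob_algebra)
    then have "emeasure (mu X \<rho>) (space (mu X \<rho>)) = 1"
      by (simp add: emeasure_space nn_integral_cong[where v="\<lambda>_. 1"] prob_space.emeasure_space_1)
    then show ?thesis
      using Giry by (simp add: space_Tm prob_spaceI)
  next
    case Subprob
    have "(\<integral>\<^sup>+ p. emeasure p (space X) \<partial>\<rho>) \<le> (\<integral>\<^sup>+ p. 1 \<partial>\<rho>)"
      using space_\<rho> by (intro nn_integral_mono) (auto dest!: space_TmD dest: subprob_space.subprob_emeasure_le_1)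
    also have "\<dots> \<le> 1"
      using subprob_space.emeasure_space_le_1[OF \<open>subprob_space \<rho>\<close>] by simp
    finally have "emeasure (mu X \<rho>) (space (mu X \<rho>)) \<le> 1"
      using emeasure_space by simp
    moreover obtain p where "p \<in> space (Tm k X)"
      using subprob_space.subprob_not_empty[OF \<open>subprob_space \<rho>\<close>] space_\<rho> by blast
    then have "space X \<noteq> {}"
      by (metis space_TmD subprob_space.subprob_not_empty sets_eq_imp_space_eq)
    ultimately show ?thesis
      using Subprob \<open>subprob_space \<rho>\<close> by (auto simp: space_Tm intro!: subprob_spaceI)
  qed
next
  fix A assume A: "A \<in> sets X"
  have "(\<lambda>\<rho>. \<integral>\<^sup>+ p. emeasure p A \<partial>\<rho>) \<in> borel_measurable (Tm k (Tm k X))"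
    using A measurable_emeasure_Tm[OF A, of Giry]
    by (cases k) (auto simp: Tm_def prob_algebra_def
                       intro!: measurable_restrict_space1 nn_integral_measurable_subprob_algebra)
  then show "(\<lambda>\<rho>. emeasure (mu X \<rho>) A) \<in> borel_measurable (Tm k (Tm k X))"
    by (rule measurable_cong[THEN iffD1, rotated]) (auto simp: emeasure_mu A dest: space_TmD)
qed

section \<open>Zero-one measures\<close>

definition zero_one_measure :: "'a measure \<Rightarrow> bool" where
  "zero_one_measure p \<longleftrightarrow> prob_space p \<and> (\<forall>A \<in> sets p. emeasure p A = 0 \<or> emeasure p A = 1)"

lemma zero_one_measure_return: "x \<in> space M \<Longrightarrow> zero_one_measure (return M x)"
  by (simp add: zero_one_measure_def prob_space_return split: split_indicator)

lemma zero_one_measure_distr: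
  assumes "zero_one_measure p" "g \<in> measurable p N"
  shows "zero_one_measure (distr p N g)"
  using assms measurable_sets[OF assms(2)]
  by (auto simp: zero_one_measure_def emeasure_distr intro: prob_space.prob_space_distr)

lemma AE_indicator_zero_one_measure:
  assumes p: "zero_one_measure p" and S: "S \<in> sets p"
  shows "AE x in p. indicator S x = emeasure p S"
proof -
  interpret prob_space p
    using p by (simp add: zero_one_measure_def)
  consider "emeasure p S = 1" | "emeasure p S = 0"
    using p S by (auto simp: zero_one_measure_def)
  then show ?thesis
  proof cases
    case 1
    moreover have "{x \<in> space p. x \<in> S} = S"
      using sets.sets_into_space[OF S] by auto
    ultimately have "AE x in p. x \<in> S"
      using S by (intro AE_I_eq_1) simp_all
    then show ?thesis
      by eventually_elim (simp add: 1)
  next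
    case 2
    then have "AE x in p. x \<notin> S"
      using S by (intro AE_I'[of S]) auto
    then show ?thesis
      by eventually_elim (simp add: 2)
  qed
qed

lemma ennreal_mult_self_eq_self_iff: "x \<noteq> \<top> \<Longrightarrow> (x::ennreal) * x = x \<longleftrightarrow> x = 0 \<or> x = 1"
proof -
  assume "x \<noteq> \<top>"
  then obtain r where r: "x = ennreal r" "r \<ge> 0"
    by (cases x) auto
  then have "x * x = x \<longleftrightarrow> r * r = r"
    by (simp add: ennreal_mult''[symmetric])
  also have "\<dots> \<longleftrightarrow> r = 0 \<or> r = 1"
    by (metis mult_cancel_right1 mult_eq_0_iff)
  finally show ?thesis
    using r by auto
qed

lemma zero_one_measure_iff_distr_diagonal:
  assumes "prob_space p"
  shows "zero_one_measure p \<longleftrightarrow> distr p (p \<Otimes>\<^sub>M p) (\<lambda>x. (x, x)) = p \<Otimes>\<^sub>M p"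
proof -
  interpret prob_space p by fact
  have emeasure_diagonal: "emeasure (distr p (p \<Otimes>\<^sub>M p) (\<lambda>x. (x, x))) (A \<times> B) = emeasure p (A \<inter> B)"
    if "A \<in> sets p" "B \<in> sets p" for A B
  proof -
    have "(\<lambda>x. (x, x)) -` (A \<times> B) \<inter> space p = A \<inter> B"
      using that sets.sets_into_space by auto
    then show ?thesis
      using that by (simp add: emeasure_distr)
  qed
  show ?thesis
  proof
    assume zero_one: "zero_one_measure p"
    show "distr p (p \<Otimes>\<^sub>M p) (\<lambda>x. (x, x)) = p \<Otimes>\<^sub>M p"
    proof (rule pair_measure_eqI[symmetric])
      fix A B assume A: "A \<in> sets p" and B: "B \<in> sets p"
      have "emeasure p (A \<inter> B) = (\<integral>\<^sup>+ x. indicator A x * indicator B x \<partial>p)"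
        using A B by (simp flip: indicator_inter_arith)
      also have "\<dots> = (\<integral>\<^sup>+ x. emeasure p A * emeasure p B \<partial>p)"
        using AE_indicator_zero_one_measure[OF zero_one A] AE_indicator_zero_one_measure[OF zero_one B]
        by (intro nn_integral_cong_AE) auto
      also have "\<dots> = emeasure p A * emeasure p B"
        by (simp add: emeasure_space_1)
      finally show "emeasure p A * emeasure p B = emeasure (distr p (p \<Otimes>\<^sub>M p) (\<lambda>x. (x, x))) (A \<times> B)"
        using A B by (simp add: emeasure_diagonal)
    qed (auto intro: prob_space_imp_sigma_finite prob_space_axioms)
  next
    assume diagonal: "distr p (p \<Otimes>\<^sub>M p) (\<lambda>x. (x, x)) = p \<Otimes>\<^sub>M p"
    have "emeasure p A = 0 \<or> emeasure p A = 1" if A: "A \<in> sets p" for A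
    proof -
      have "emeasure p A * emeasure p A = emeasure (p \<Otimes>\<^sub>M p) (A \<times> A)"
        using emeasure_pair_measure_Times[OF A A] by simp
      also have "\<dots> = emeasure p A"
        using emeasure_diagonal[OF A A] by (simp add: diagonal)
      finally have "emeasure p A * emeasure p A = emeasure p A" .
      then show ?thesis
        by (simp add: ennreal_mult_self_eq_self_iff)
    qed
    then show "zero_one_measure p"
      by (simp add: zero_one_measure_def prob_space_axioms)
  qed
qed

lemma sigma_algebra_AE_mem_iff:
  assumes \<phi>: "\<phi> \<in> measurable N M" and \<rho>: "sets \<rho> = sets N" and m: "m \<in> space M"
  shows "sigma_algebra (space M) {B \<in> sets M. AE z in \<rho>. \<phi> z \<in> B \<longleftrightarrow> m \<in> B}"
  unfolding sigma_algebra_iff2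
proof (intro conjI ballI allI impI)
  show "{B \<in> sets M. AE z in \<rho>. \<phi> z \<in> B \<longleftrightarrow> m \<in> B} \<subseteq> Pow (space M)"
    "{} \<in> {B \<in> sets M. AE z in \<rho>. \<phi> z \<in> B \<longleftrightarrow> m \<in> B}"
    using sets.sets_into_space by auto
next
  have AE_\<phi>_in_space: "AE z in \<rho>. \<phi> z \<in> space M"
    using measurable_space[OF \<phi>] sets_eq_imp_space_eq[OF \<rho>] by (intro AE_I2) simp
  fix B assume "B \<in> {B \<in> sets M. AE z in \<rho>. \<phi> z \<in> B \<longleftrightarrow> m \<in> B}"
  then show "space M - B \<in> {B \<in> sets M. AE z in \<rho>. \<phi> z \<in> B \<longleftrightarrow> m \<in> B}"
    using AE_\<phi>_in_space m by (auto elim: AE_mp)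
next
  fix B :: "nat \<Rightarrow> _" assume "range B \<subseteq> {B \<in> sets M. AE z in \<rho>. \<phi> z \<in> B \<longleftrightarrow> m \<in> B}"
  then have "range B \<subseteq> sets M" "AE z in \<rho>. \<forall>i. \<phi> z \<in> B i \<longleftrightarrow> m \<in> B i"
    by (auto simp: AE_all_countable)
  then show "(\<Union>i. B i) \<in> {B \<in> sets M. AE z in \<rho>. \<phi> z \<in> B \<longleftrightarrow> m \<in> B}"
    by (auto elim: AE_mp)
qed

lemma AE_mem_iff_if_AE_emeasure_eq:
  assumes \<phi>: "\<phi> \<in> measurable N (Tm k Y)" and \<rho>: "sets \<rho> = sets N"
    and m: "m \<in> space (Tm k Y)"
    and AE_eq: "\<And>A. A \<in> sets Y \<Longrightarrow> AE z in \<rho>. emeasure (\<phi> z) A = emeasure m A"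
    and B: "B \<in> sets (Tm k Y)"
  shows "AE z in \<rho>. \<phi> z \<in> B \<longleftrightarrow> m \<in> B"
proof -
  let ?\<Omega> = "space (Tm k Y)"
  define \<Sigma> where "\<Sigma> = {B \<in> sets (Tm k Y). AE z in \<rho>. \<phi> z \<in> B \<longleftrightarrow> m \<in> B}"
  have "sigma_algebra ?\<Omega> \<Sigma>"
    unfolding \<Sigma>_def using \<phi> \<rho> m by (rule sigma_algebra_AE_mem_iff)
  then have sets_\<Sigma>: "sets (sigma ?\<Omega> \<Sigma>) = \<Sigma>" and space_\<Sigma>: "space (sigma ?\<Omega> \<Sigma>) = ?\<Omega>"
    by (simp_all add: sigma_algebra.sets_measure_of_eq sigma_algebra.space_measure_of_eq)
  have AE_\<phi>_in_\<Omega>: "AE z in \<rho>. \<phi> z \<in> ?\<Omega>"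
    using measurable_space[OF \<phi>] sets_eq_imp_space_eq[OF \<rho>] by (intro AE_I2) simp
  have "(\<lambda>q. q) \<in> measurable (sigma ?\<Omega> \<Sigma>) (Tm k Y)"
  proof (rule measurable_TmI)
    fix A assume A: "A \<in> sets Y"
    show "(\<lambda>q. emeasure q A) \<in> borel_measurable (sigma ?\<Omega> \<Sigma>)"
    proof (rule measurableI)
      fix U :: "ennreal set" assume "U \<in> sets borel"
      then have "(\<lambda>q. emeasure q A) -` U \<inter> ?\<Omega> \<in> sets (Tm k Y)"
        using measurable_sets[OF measurable_emeasure_Tm[OF A]] by blast
      moreover have "AE z in \<rho>. \<phi> z \<in> (\<lambda>q. emeasure q A) -` U \<inter> ?\<Omega> \<longleftrightarrow> m \<in> (\<lambda>q. emeasure q A) -` U \<inter> ?\<Omega>"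
        using AE_eq[OF A] AE_\<phi>_in_\<Omega> by eventually_elim (use m in auto)
      ultimately show "(\<lambda>q. emeasure q A) -` U \<inter> space (sigma ?\<Omega> \<Sigma>) \<in> sets (sigma ?\<Omega> \<Sigma>)"
        unfolding sets_\<Sigma> space_\<Sigma> by (simp add: \<Sigma>_def)
    qed simp
  qed (simp add: space_\<Sigma>)
  from measurable_sets[OF this B] have "B \<in> \<Sigma>"
    using sets.sets_into_space[OF B] unfolding sets_\<Sigma> space_\<Sigma> by (simp add: Int_absorb2)
  then show ?thesis
    by (simp add: \<Sigma>_def)
qed

lemma distr_kernel_eq_return_if_AE_emeasure_eq:
  assumes \<phi>: "\<phi> \<in> measurable N (Tm k Y)"
    and \<rho>: "sets \<rho> = sets N" "prob_space \<rho>"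
    and m: "m \<in> space (Tm k Y)"
    and AE_eq: "\<And>A. A \<in> sets Y \<Longrightarrow> AE z in \<rho>. emeasure (\<phi> z) A = emeasure m A"
  shows "distr \<rho> (Tm k Y) \<phi> = return (Tm k Y) m"
proof (rule measure_eqI)
  fix B assume "B \<in> sets (distr \<rho> (Tm k Y) \<phi>)"
  then have B: "B \<in> sets (Tm k Y)"
    by simp
  have \<phi>': "\<phi> \<in> measurable \<rho> (Tm k Y)"
    using \<phi> \<rho>(1) by (simp cong: measurable_cong_sets)
  have "emeasure \<rho> (\<phi> -` B \<inter> space \<rho>) = emeasure \<rho> (if m \<in> B then space \<rho> else {})"
    using AE_mem_iff_if_AE_emeasure_eq[OF \<phi> \<rho>(1) m AE_eq B] measurable_sets[OF \<phi>' B]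
    by (intro emeasure_eq_AE) auto
  then show "emeasure (distr \<rho> (Tm k Y) \<phi>) B = emeasure (return (Tm k Y) m) B"
    using B \<phi>' prob_space.emeasure_space_1[OF \<rho>(2)] by (simp add: emeasure_distr split: split_indicator)
qed simp

section \<open>The submonad \<open>D\<close>\<close>

lemma space_Dsp:
  "space (Dsp k Y) = {p \<in> space (Tm k Y). return (Tm k Y) p = distr p (Tm k Y) (return Y)}"
  by (auto simp: Dsp_def space_restrict_space)

lemma zero_one_measure_if_in_space_Dsp:
  assumes "p \<in> space (Dsp k Y)"
  shows "sets p = sets Y" "zero_one_measure p"
proof -
  from assms have p: "p \<in> space (Tm k Y)" and eq: "return (Tm k Y) p = distr p (Tm k Y) (return Y)"
    by (auto simp: space_Dsp)
  show sets_p: "sets p = sets Y"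
    using space_TmD[OF p] by simp
  have return: "return Y \<in> measurable p (Tm k Y)"
    using measurable_return_Tm sets_p by (simp cong: measurable_cong_sets)
  have "return Y -` space (Tm k Y) \<inter> space p = space p"
    using measurable_space[OF return] by auto
  then have "emeasure p (space p) = emeasure (return (Tm k Y) p) (space (Tm k Y))"
    unfolding eq using return by (simp add: emeasure_distr)
  then have "prob_space p"
    using p by (intro prob_spaceI) simp
  moreover have "emeasure p A = 0 \<or> emeasure p A = 1" if A: "A \<in> sets Y" for A
  proof -
    define B where "B = {q \<in> space (Tm k Y). emeasure q A = 1}"
    have B: "B \<in> sets (Tm k Y)"
      unfolding B_def using measurable_emeasure_Tm[OF A] by measurable
    have "return Y -` B \<inter> space p = A"
      using measurable_space[OF return] sets.sets_into_space[OF A] A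
      by (auto simp: B_def sets_eq_imp_space_eq[OF sets_p] split: split_indicator_asm)
    then have "indicator B p = emeasure p A"
      using arg_cong[where f="\<lambda>M. emeasure M B", OF eq] return B by (simp add: emeasure_distr)
    then show ?thesis
      by (cases "p \<in> B") auto
  qed
  ultimately show "zero_one_measure p"
    using sets_p by (simp add: zero_one_measure_def)
qed

lemma in_space_Dsp_if_zero_one_measure:
  assumes sets_p: "sets p = sets Y" and zero_one: "zero_one_measure p"
  shows "p \<in> space (Dsp k Y)"
proof -
  have p: "p \<in> space (Tm k Y)"
    using zero_one sets_p by (intro prob_space_in_space_Tm) (auto simp: zero_one_measure_def)
  have "distr p (Tm k Y) (return Y) = return (Tm k Y) p"
  proof (rule distr_kernel_eq_return_if_AE_emeasure_eq[OF measurable_return_Tm sets_p _ p])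
    show "prob_space p"
      using zero_one by (simp add: zero_one_measure_def)
    show "AE y in p. emeasure (return Y y) A = emeasure p A" if "A \<in> sets Y" for A
      using AE_indicator_zero_one_measure[OF zero_one, of A] that sets_p by simp
  qed
  then show ?thesis
    using p by (simp add: space_Dsp)
qed

lemma in_space_Dsp_iff: "p \<in> space (Dsp k Y) \<longleftrightarrow> sets p = sets Y \<and> zero_one_measure p"
  using zero_one_measure_if_in_space_Dsp in_space_Dsp_if_zero_one_measure by blast

lemma measurable_Dsp_inclusion: "(\<lambda>p. p) \<in> measurable (Dsp k X) (Tm k X)"
  unfolding Dsp_def by (rule measurable_restrict_space1[OF measurable_id])

lemma measurable_DspI:
  assumes "f \<in> measurable M (Tm k X)" "\<And>x. x \<in> space M \<Longrightarrow> f x \<in> space (Dsp k X)"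
  shows "f \<in> measurable M (Dsp k X)"
  unfolding Dsp_def by (rule measurable_restrict_space2) (use assms in \<open>auto simp: space_Dsp\<close>)

lemma measurable_return_Dsp: "return X \<in> measurable X (Dsp k X)"
  by (rule measurable_DspI[OF measurable_return_Tm]) (simp add: in_space_Dsp_iff zero_one_measure_return)

lemma measurable_distr_Dsp:
  assumes g: "g \<in> measurable X Y"
  shows "(\<lambda>p. distr p Y g) \<in> measurable (Dsp k X) (Dsp k Y)"
proof (rule measurable_DspI)
  show "(\<lambda>p. distr p Y g) \<in> measurable (Dsp k X) (Tm k Y)"
    using measurable_compose[OF measurable_Dsp_inclusion measurable_distr_Tm[OF g]] .
  show "distr p Y g \<in> space (Dsp k Y)" if "p \<in> space (Dsp k X)" for p
    using that g by (auto simp: in_space_Dsp_iff intro!: zero_one_measure_distr cong: measurable_cong_sets)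
qed

lemma measurable_emeasure_Dsp: "A \<in> sets X \<Longrightarrow> (\<lambda>p. emeasure p A) \<in> borel_measurable (Dsp k X)"
  unfolding Dsp_def by (rule measurable_restrict_space1[OF measurable_emeasure_Tm])

lemma Dmult_eq_mu: "Dmult k X \<rho> = mu X (distr \<rho> (Tm k X) (\<lambda>p. p))"
  by (simp add: Dmult_def theta_def[abs_def])

lemma sets_Dmult [simp]: "sets (Dmult k X \<rho>) = sets X"
  by (simp add: Dmult_eq_mu)

lemma emeasure_Dmult:
  assumes "sets \<rho> = sets (Dsp k X)" "A \<in> sets X"
  shows "emeasure (Dmult k X \<rho>) A = (\<integral>\<^sup>+ q. emeasure q A \<partial>\<rho>)"
proof -
  have "(\<lambda>p. p) \<in> measurable \<rho> (Tm k X)"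
    using measurable_Dsp_inclusion assms(1) by (simp cong: measurable_cong_sets)
  then show ?thesis
    using assms by (simp add: Dmult_eq_mu emeasure_mu[where k=k] nn_integral_distr measurable_emeasure_Tm)
qed

lemma emeasure_Dmult_zero_one:
  assumes \<rho>: "\<rho> \<in> space (Dsp k (Dsp k X))" and A: "A \<in> sets X"
  shows "emeasure (Dmult k X \<rho>) A = emeasure \<rho> {q \<in> space (Dsp k X). emeasure q A = 1}"
proof -
  let ?S = "{q \<in> space (Dsp k X). emeasure q A = 1}"
  have sets_\<rho>: "sets \<rho> = sets (Dsp k X)"
    using \<rho> by (simp add: in_space_Dsp_iff)
  have "emeasure (Dmult k X \<rho>) A = (\<integral>\<^sup>+ q. emeasure q A \<partial>\<rho>)"
    by (rule emeasure_Dmult[OF sets_\<rho> A])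
  also have "\<dots> = (\<integral>\<^sup>+ q. indicator ?S q \<partial>\<rho>)"
    using A sets_eq_imp_space_eq[OF sets_\<rho>]
    by (intro nn_integral_cong) (auto simp: in_space_Dsp_iff zero_one_measure_def split: split_indicator)
  also have "\<dots> = emeasure \<rho> ?S"
    using measurable_emeasure_Dsp[OF A] sets_\<rho> by simp
  finally show ?thesis .
qed

lemma Dmult_in_space_Dsp:
  assumes \<rho>: "\<rho> \<in> space (Dsp k (Dsp k X))"
  shows "Dmult k X \<rho> \<in> space (Dsp k X)"
proof -
  have sets_\<rho>: "sets \<rho> = sets (Dsp k X)" and zero_one: "zero_one_measure \<rho>"
    using \<rho> by (simp_all add: in_space_Dsp_iff)
  have "emeasure q (space X) = 1" if "q \<in> space (Dsp k X)" for q
  proof -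
    have "sets q = sets X" "prob_space q"
      using that by (simp_all add: in_space_Dsp_iff zero_one_measure_def)
    then show ?thesis
      by (metis prob_space.emeasure_space_1 sets_eq_imp_space_eq)
  qed
  then have "{q \<in> space (Dsp k X). emeasure q (space X) = 1} = space (Dsp k X)"
    by auto
  moreover have "emeasure \<rho> (space (Dsp k X)) = 1"
    using zero_one sets_eq_imp_space_eq[OF sets_\<rho>]
    by (metis zero_one_measure_def prob_space.emeasure_space_1)
  ultimately have "prob_space (Dmult k X \<rho>)"
    using emeasure_Dmult_zero_one[OF \<rho> sets.top] by (intro prob_spaceI) (simp add: Dmult_eq_mu)
  moreover have "{q \<in> space (Dsp k X). emeasure q A = 1} \<in> sets \<rho>" if "A \<in> sets X" for A
    using measurable_emeasure_Dsp[OF that] sets_\<rho> by measurable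
  ultimately show ?thesis
    using zero_one by (simp add: in_space_Dsp_iff zero_one_measure_def emeasure_Dmult_zero_one[OF \<rho>])
qed

lemma measurable_Dmult: "Dmult k X \<in> measurable (Dsp k (Dsp k X)) (Dsp k X)"
proof (rule measurable_DspI)
  have "(\<lambda>\<rho>. distr \<rho> (Tm k X) (\<lambda>p. p)) \<in> measurable (Dsp k (Dsp k X)) (Tm k (Tm k X))"
    using measurable_compose[OF measurable_Dsp_inclusion measurable_distr_Tm[OF measurable_Dsp_inclusion]] .
  from measurable_compose[OF this measurable_mu]
  show "Dmult k X \<in> measurable (Dsp k (Dsp k X)) (Tm k X)"
    by (simp add: Dmult_eq_mu[abs_def])
qed (rule Dmult_in_space_Dsp)

lemma Dmult_return:
  assumes p: "p \<in> space (Dsp k X)"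
  shows "Dmult k X (return (Dsp k X) p) = p"
proof (rule measure_eqI)
  show "sets (Dmult k X (return (Dsp k X) p)) = sets p"
    using p by (simp add: in_space_Dsp_iff)
  show "emeasure (Dmult k X (return (Dsp k X) p)) A = emeasure p A"
    if "A \<in> sets (Dmult k X (return (Dsp k X) p))" for A
    using that p by (simp add: emeasure_Dmult nn_integral_return measurable_emeasure_Dsp)
qed

lemma Dmult_distr_return:
  assumes p: "p \<in> space (Dsp k X)"
  shows "Dmult k X (distr p (Dsp k X) (return X)) = p"
proof (rule measure_eqI)
  have sets_p: "sets p = sets X"
    using p by (simp add: in_space_Dsp_iff)
  show "sets (Dmult k X (distr p (Dsp k X) (return X))) = sets p"
    using sets_p by simp
  have return: "return X \<in> measurable p (Dsp k X)"
    using measurable_return_Dsp sets_p by (simp cong: measurable_cong_sets)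
  show "emeasure (Dmult k X (distr p (Dsp k X) (return X))) A = emeasure p A"
    if "A \<in> sets (Dmult k X (distr p (Dsp k X) (return X)))" for A
    using that return sets_p
    by (simp add: emeasure_Dmult nn_integral_distr measurable_emeasure_Dsp)
qed

lemma distr_Dsp_inclusion_eq_return_Dmult:
  assumes \<rho>: "\<rho> \<in> space (Dsp k (Dsp k X))"
  shows "distr \<rho> (Tm k X) (\<lambda>q. q) = return (Tm k X) (Dmult k X \<rho>)"
proof (rule distr_kernel_eq_return_if_AE_emeasure_eq[OF measurable_Dsp_inclusion])
  have zero_one: "zero_one_measure \<rho>"
    using \<rho> by (simp add: in_space_Dsp_iff)
  then show "prob_space \<rho>"
    by (simp add: zero_one_measure_def)
  show sets_\<rho>: "sets \<rho> = sets (Dsp k X)"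
    using \<rho> by (simp add: in_space_Dsp_iff)
  show "Dmult k X \<rho> \<in> space (Tm k X)"
    using Dmult_in_space_Dsp[OF \<rho>] by (simp add: space_Dsp)
  fix A assume A: "A \<in> sets X"
  define S where "S = {q \<in> space (Dsp k X). emeasure q A = 1}"
  have S: "S \<in> sets \<rho>"
    unfolding S_def using measurable_emeasure_Dsp[OF A] sets_\<rho> by measurable
  have indicator_S: "emeasure q A = indicator S q" if "q \<in> space \<rho>" for q
    using that A sets_eq_imp_space_eq[OF sets_\<rho>]
    by (auto simp: S_def in_space_Dsp_iff zero_one_measure_def split: split_indicator)
  have Dmult_A: "emeasure (Dmult k X \<rho>) A = emeasure \<rho> S"
    unfolding S_def by (rule emeasure_Dmult_zero_one[OF \<rho> A])
  from AE_indicator_zero_one_measure[OF zero_one S] AE_space[of \<rho>]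
  show "AE q in \<rho>. emeasure q A = emeasure (Dmult k X \<rho>) A"
    by eventually_elim (simp add: indicator_S Dmult_A)
qed

lemma return_Dmult:
  assumes \<rho>: "\<rho> \<in> space (Dsp k (Dsp k X))"
  shows "return (Dsp k X) (Dmult k X \<rho>) = \<rho>"
proof (rule measure_eqI)
  have sets_\<rho>: "sets \<rho> = sets (Dsp k X)"
    using \<rho> by (simp add: in_space_Dsp_iff)
  then show "sets (return (Dsp k X) (Dmult k X \<rho>)) = sets \<rho>"
    by simp
  fix B assume "B \<in> sets (return (Dsp k X) (Dmult k X \<rho>))"
  then have B: "B \<in> sets (Dsp k X)"
    by simp
  then obtain B' where B': "B' \<in> sets (Tm k X)" "B = B' \<inter> space (Dsp k X)"
    by (auto simp: Dsp_def sets_restrict_space space_restrict_space)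
  have inclusion: "(\<lambda>q. q) \<in> measurable \<rho> (Tm k X)"
    using measurable_Dsp_inclusion sets_\<rho> by (simp cong: measurable_cong_sets)
  have "emeasure \<rho> B = emeasure (distr \<rho> (Tm k X) (\<lambda>q. q)) B'"
    using B' inclusion sets_eq_imp_space_eq[OF sets_\<rho>] by (simp add: emeasure_distr)
  also have "\<dots> = indicator B (Dmult k X \<rho>)"
    using B' Dmult_in_space_Dsp[OF \<rho>]
    by (simp add: distr_Dsp_inclusion_eq_return_Dmult[OF \<rho>] split: split_indicator)
  also have "\<dots> = emeasure (return (Dsp k X) (Dmult k X \<rho>)) B"
    using B by simp
  finally show "emeasure (return (Dsp k X) (Dmult k X \<rho>)) B = emeasure \<rho> B"
    by simp
qed

lemma Dmult_assoc:
  assumes R: "R \<in> space (Dsp k (Dsp k (Dsp k X)))"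
  shows "Dmult k X (Dmult k (Dsp k X) R) = Dmult k X (distr R (Dsp k X) (Dmult k X))"
proof -
  define \<rho> where "\<rho> = Dmult k (Dsp k X) R"
  have \<rho>: "\<rho> \<in> space (Dsp k (Dsp k X))"
    unfolding \<rho>_def by (rule Dmult_in_space_Dsp[OF R])
  have "distr R (Dsp k X) (Dmult k X) = distr (return (Dsp k (Dsp k X)) \<rho>) (Dsp k X) (Dmult k X)"
    unfolding \<rho>_def using return_Dmult[OF R] by simp
  also have "\<dots> = return (Dsp k X) (Dmult k X \<rho>)"
    by (rule distr_return[OF measurable_Dmult \<rho>])
  finally show ?thesis
    using Dmult_return[OF Dmult_in_space_Dsp[OF \<rho>]] by (simp add: \<rho>_def)
qed

section \<open>Deterministic Kleisli morphisms\<close>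

lemma measurable_ktensor:
  assumes f: "f \<in> measurable X (Tm k Y)" and g: "g \<in> measurable X' (Tm k Y')"
  shows "ktensor f g \<in> measurable (X \<Otimes>\<^sub>M X') (Tm k (Y \<Otimes>\<^sub>M Y'))"
proof -
  have "ktensor f g = (\<lambda>z. f (fst z) \<Otimes>\<^sub>M g (snd z))"
    by (auto simp: ktensor_def)
  then show ?thesis
    using f g by (cases k) (auto simp: Tm_def intro!: measurable_pair_prob measurable_pair_measure)
qed

lemma kcomp_ktensor_kcopy:
  assumes f: "f \<in> measurable X (Tm k Y)" and x: "x \<in> space X"
  shows "kcomp k (Y \<Otimes>\<^sub>M Y) (ktensor f f) (kcopy X) x = f x \<Otimes>\<^sub>M f x"
proof -
  have xx: "(x, x) \<in> space (X \<Otimes>\<^sub>M X)"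
    using x by (simp add: space_pair_measure)
  then have "ktensor f f (x, x) \<in> space (Tm k (Y \<Otimes>\<^sub>M Y))"
    using measurable_space[OF measurable_ktensor[OF f f]] by blast
  then show ?thesis
    unfolding kcomp_def kcopy_def
    by (simp add: distr_return[OF measurable_ktensor[OF f f] xx] mu_return) (simp add: ktensor_def)
qed

lemma kcomp_kcopy:
  assumes "f x \<in> space (Tm k Y)"
  shows "kcomp k (Y \<Otimes>\<^sub>M Y) (kcopy Y) f x = distr (f x) (Y \<Otimes>\<^sub>M Y) (\<lambda>y. (y, y))"
  unfolding kcomp_def kcopy_def by (rule mu_distr_return[OF assms]) measurable

lemma kcomp_kdel:
  assumes "f x \<in> space (Tm k Y)"
  shows "kcomp k one_space (kdel Y) f x = distr (f x) one_space (\<lambda>_. ())"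
  unfolding kcomp_def kdel_def by (rule mu_distr_return[OF assms]) (simp add: one_space_def)

lemma distr_one_space_eq_return_iff:
  "distr p one_space (\<lambda>_. ()) = return one_space () \<longleftrightarrow> emeasure p (space p) = 1"
proof
  assume "distr p one_space (\<lambda>_. ()) = return one_space ()"
  from arg_cong[where f="\<lambda>M. emeasure M UNIV", OF this]
  show "emeasure p (space p) = 1"
    by (simp add: one_space_def emeasure_distr)
next
  assume "emeasure p (space p) = 1"
  then show "distr p one_space (\<lambda>_. ()) = return one_space ()"
    by (intro measure_eqI) (auto simp: one_space_def emeasure_distr vimage_def split: split_indicator)
qed

lemma in_space_Dsp_iff_distr_diagonal:
  assumes p: "p \<in> space (Tm k Y)"
  shows "p \<in> space (Dsp k Y) \<longleftrightarrow>
    distr p (Y \<Otimes>\<^sub>M Y) (\<lambda>y. (y, y)) = p \<Otimes>\<^sub>M p \<and> emeasure p (space p) = 1"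
proof -
  have sets_p: "sets p = sets Y"
    using space_TmD[OF p] by simp
  have "p \<in> space (Dsp k Y) \<longleftrightarrow> zero_one_measure p"
    using sets_p by (simp add: in_space_Dsp_iff)
  also have "\<dots> \<longleftrightarrow> distr p (p \<Otimes>\<^sub>M p) (\<lambda>y. (y, y)) = p \<Otimes>\<^sub>M p \<and> prob_space p"
    using zero_one_measure_iff_distr_diagonal by (auto simp: zero_one_measure_def)
  also have "distr p (p \<Otimes>\<^sub>M p) (\<lambda>y. (y, y)) = distr p (Y \<Otimes>\<^sub>M Y) (\<lambda>y. (y, y))"
    using sets_p by (intro distr_cong) (auto intro: sets_pair_measure_cong)
  also have "prob_space p \<longleftrightarrow> emeasure p (space p) = 1"
    by (blast intro: prob_spaceI prob_space.emeasure_space_1)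
  finally show ?thesis .
qed

lemma deterministic_iff_in_space_Dsp:
  assumes f: "f \<in> measurable X (Tm k Y)"
  shows "deterministic k X Y f \<longleftrightarrow> (\<forall>x \<in> space X. f x \<in> space (Dsp k Y))"
proof -
  have "kcomp k (Y \<Otimes>\<^sub>M Y) (kcopy Y) f x = kcomp k (Y \<Otimes>\<^sub>M Y) (ktensor f f) (kcopy X) x \<and>
        kcomp k one_space (kdel Y) f x = kdel X x \<longleftrightarrow> f x \<in> space (Dsp k Y)"
    if x: "x \<in> space X" for x
  proof -
    have fx: "f x \<in> space (Tm k Y)"
      using measurable_space[OF f x] .
    have "kdel X x = return one_space ()"
      by (simp add: kdel_def)
    then show ?thesis
      by (simp add: kcomp_kcopy[of f x, OF fx] kcomp_kdel[of f x, OF fx] kcomp_ktensor_kcopy[OF f x]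
          in_space_Dsp_iff_distr_diagonal[OF fx] distr_one_space_eq_return_iff)
  qed
  then show ?thesis
    unfolding deterministic_def by blast
qed

theorem corollary9p3:
  fixes k :: giry_kind and X :: "'a measure" and Y :: "'b measure"
  shows
    \<comment> \<open>D is a submonad: the action on morphisms, unit and multiplication factor through theta\<close>
    "(\<forall>g \<in> measurable X Y. \<exists>Dg \<in> measurable (Dsp k X) (Dsp k Y).
        \<forall>p \<in> space (Dsp k X). theta (Dg p) = distr (theta p) Y g)
   \<and> (\<exists>e \<in> measurable X (Dsp k X). \<forall>x \<in> space X. theta (e x) = return X x)
   \<and> Dmult k X \<in> measurable (Dsp k (Dsp k X)) (Dsp k X)
   \<comment> \<open>the monad laws for D\<close>
   \<and> (\<forall>p \<in> space (Dsp k X). Dmult k X (return (Dsp k X) p) = p)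
   \<and> (\<forall>p \<in> space (Dsp k X). Dmult k X (distr p (Dsp k X) (return X)) = p)
   \<and> (\<forall>R \<in> space (Dsp k (Dsp k (Dsp k X))).
        Dmult k X (Dmult k (Dsp k X) R) = Dmult k X (distr R (Dsp k X) (Dmult k X)))
   \<comment> \<open>D is idempotent: its multiplication is an isomorphism in Meas\<close>
   \<and> (\<exists>h \<in> measurable (Dsp k X) (Dsp k (Dsp k X)).
        (\<forall>\<rho> \<in> space (Dsp k (Dsp k X)). h (Dmult k X \<rho>) = \<rho>) \<and>
        (\<forall>p \<in> space (Dsp k X). Dmult k X (h p) = p))
   \<comment> \<open>deterministic Kleisli morphisms are exactly those factoring through theta\<close>
   \<and> (\<forall>f \<in> measurable X (Tm k Y).
        deterministic k X Y f \<longleftrightarrow>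
        (\<exists>h \<in> measurable X (Dsp k Y). \<forall>x \<in> space X. theta (h x) = f x))"
proof (intro conjI ballI)
  show "\<exists>Dg \<in> measurable (Dsp k X) (Dsp k Y). \<forall>p \<in> space (Dsp k X). theta (Dg p) = distr (theta p) Y g"
    if "g \<in> measurable X Y" for g
    using measurable_distr_Dsp[OF that] by (auto simp: theta_def)
  show "\<exists>e \<in> measurable X (Dsp k X). \<forall>x \<in> space X. theta (e x) = return X x"
    using measurable_return_Dsp by (auto simp: theta_def)
  show "\<exists>h \<in> measurable (Dsp k X) (Dsp k (Dsp k X)).
          (\<forall>\<rho> \<in> space (Dsp k (Dsp k X)). h (Dmult k X \<rho>) = \<rho>) \<and>
          (\<forall>p \<in> space (Dsp k X). Dmult k X (h p) = p)"
    using measurable_return_Dsp return_Dmult Dmult_return by blast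
  show "deterministic k X Y f \<longleftrightarrow> (\<exists>h \<in> measurable X (Dsp k Y). \<forall>x \<in> space X. theta (h x) = f x)"
    if f: "f \<in> measurable X (Tm k Y)" for f
    unfolding deterministic_iff_in_space_Dsp[OF f] theta_def
    using measurable_DspI[OF f] measurable_space by (metis (no_types, lifting))
qed (simp_all add: measurable_Dmult Dmult_return Dmult_distr_return Dmult_assoc)

end
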